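(* Let $H$ be the graph consisting of two vertex-disjoint triangles $v_1v_2v_3$ and $w_1w_2w_3$ together with the edge $v_3w_1$. Let $n\ge 7$ and let $G$ be a graph with $n$ vertices obtained from $H$ by attaching $n-6$ pendant edges (new leaves) to vertices of $H$, none of them to $v_3$ or $w_1$. Then $\operatorname{avm}(G)>\operatorname{avm}(T_n^1(3,3))$.
   Context: $\operatorname{avm}(G)$ is the average of $|M|$ over all maximal matchings $M$ of $G$ (a matching is maximal if not properly contained in another matching). $T_n^1(3,3)$ is the graph obtained from $H$ by attaching $n-6$ pendant edges (new leaves) to $v_3$. *)

theory Defs
  imports Complex_Main
begin

text \<open>Simple graphs given by their edge set; an edge is a 2-element set of vertices.\<close>

definition matching :: "'a set set \<Rightarrow> 'a set set \<Rightarrow> bool" where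
  "matching E M \<longleftrightarrow> M \<subseteq> E \<and> (\<forall>e\<in>M. \<forall>f\<in>M. e \<noteq> f \<longrightarrow> e \<inter> f = {})"

definition maximal_matching :: "'a set set \<Rightarrow> 'a set set \<Rightarrow> bool" where
  "maximal_matching E M \<longleftrightarrow> matching E M \<and> (\<forall>M'. matching E M' \<and> M \<subseteq> M' \<longrightarrow> M' = M)"

definition avm :: "'a set set \<Rightarrow> real" where
  "avm E = (\<Sum>M\<in>{M. maximal_matching E M}. real (card M)) / real (card {M. maximal_matching E M})"

text \<open>H: triangles v1v2v3 = 0,1,2 and w1w2w3 = 3,4,5, plus the edge v3w1 = {2,3}.\<close>
definition H_edges :: "nat set set" where
  "H_edges = {{0,1},{1,2},{0,2},{3,4},{4,5},{3,5},{2,3}}"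

definition pendant_graph :: "nat \<Rightarrow> (nat \<Rightarrow> nat) \<Rightarrow> nat set set" where
  "pendant_graph n a = H_edges \<union> (\<lambda>i. {i, a i}) ` {6..<n}"

text \<open>T_n^1(3,3): all n-6 leaves attached to v3 = vertex 2.\<close>
definition T1_33 :: "nat \<Rightarrow> nat set set" where
  "T1_33 n = pendant_graph n (\<lambda>_. 2)"

end

theory Submission
  imports Defs
begin

text \<open>
  Every maximal matching of \<open>G = pendant_graph n a\<close> has at least two edges. One with exactly two
  edges uses no pendant edge (a pendant edge meets only one vertex of \<open>H\<close>, and a vertex cover of
  \<open>H\<close> needs four), so it is one of the eight pairs \<open>{s, t}\<close> of triangle edges that also cover the
  bridge \<open>v3w1\<close>, and it must contain every attachment vertex: there are at most five such pairs
  through one vertex of \<open>{v1, v2, w2, w3}\<close>, and at most three through two of them. On the other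
  hand, each pendant edge \<open>{i, a i}\<close> together with any of four suitable pairs of \<open>H\<close>-edges (two, if
  the attachment vertices are not all equal) extends to a maximal matching with at least three
  edges, and distinct choices give distinct matchings. With \<open>S\<close> two-edge maximal matchings among
  \<open>N\<close> in total, \<open>avm G \<ge> 3 - S / N\<close>, and the counts give \<open>S / N < 6 / (3 (n - 6) + 7)\<close>.
  In \<open>T_n^1(3,3)\<close> every maximal matching has at most three edges, six have exactly two, and there
  are at most \<open>3 (n - 6) + 7\<close> of them, so \<open>avm T \<le> 3 - 6 / (3 (n - 6) + 7)\<close>.
\<close>

lemma card_two_le: "card {x, y} \<le> 2"
  by (simp add: card_insert_if)

lemma card_three_le: "card {x, y, z} \<le> 3"
  by (simp add: card_insert_if)

lemma card_le_2_doubletonE: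
  assumes "finite A" "A \<noteq> {}" "card A \<le> 2"
  obtains x y where "A = {x, y}"
proof -
  have "card A \<noteq> 0" using assms(1,2) by simp
  then have "card A = Suc 0 \<or> card A = 2" using assms(3) by linarith
  then show ?thesis using that by (auto simp: card_1_singleton_iff card_2_iff)
qed

lemma card_Sigma_const:
  assumes "finite A" and "\<And>x. x \<in> A \<Longrightarrow> card (B x) = c" and "c \<noteq> 0"
  shows "card (SIGMA x:A. B x) = card A * c"
proof -
  have "finite (B x)" if "x \<in> A" for x
    using assms(2)[OF that] assms(3) card.infinite by metis
  then show ?thesis using assms(1,2) by simp
qed

section \<open>Maximal matchings and vertex covers\<close>

definition vertex_cover :: "'a set set \<Rightarrow> 'a set \<Rightarrow> bool" where
  "vertex_cover E V \<longleftrightarrow> (\<forall>e\<in>E. e \<inter> V \<noteq> {})"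

abbreviation maximal_matchings :: "'a set set \<Rightarrow> 'a set set set" where
  "maximal_matchings E \<equiv> {M. maximal_matching E M}"

lemma vertex_cover_Un: "vertex_cover (A \<union> B) V \<longleftrightarrow> vertex_cover A V \<and> vertex_cover B V"
  by (auto simp: vertex_cover_def)

lemma vertex_cover_Int:
  "vertex_cover E V \<Longrightarrow> (\<And>e. e \<in> E \<Longrightarrow> e \<subseteq> U) \<Longrightarrow> vertex_cover E (V \<inter> U)"
  unfolding vertex_cover_def by blast

lemma matching_subset: "matching E M \<Longrightarrow> N \<subseteq> M \<Longrightarrow> matching E N"
  unfolding matching_def by blast

lemma matching_edges_eqI:
  "matching E M \<Longrightarrow> e \<in> M \<Longrightarrow> f \<in> M \<Longrightarrow> x \<in> e \<Longrightarrow> x \<in> f \<Longrightarrow> e = f"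
  unfolding matching_def by blast

lemma matching_disjointD:
  "matching E M \<Longrightarrow> e \<in> M \<Longrightarrow> f \<in> M \<Longrightarrow> e \<noteq> f \<Longrightarrow> e \<inter> f = {}"
  unfolding matching_def by blast

lemma matching_Int_clique:
  assumes "matching E M" and "\<forall>e\<in>S. \<forall>f\<in>S. e \<inter> f \<noteq> {}"
  shows "M \<inter> S = {} \<or> (\<exists>t\<in>S. M \<inter> S = {t})"
proof (cases "M \<inter> S = {}")
  case False
  then obtain t where t: "t \<in> M" "t \<in> S" by blast
  have "u = t" if "u \<in> M" "u \<in> S" for u
  proof -
    have "u \<inter> t \<noteq> {}" using assms(2) that(2) t(2) by blast
    then show ?thesis using matching_edges_eqI[OF assms(1) that(1) t(1)] by blast
  qed
  then show ?thesis using t by blast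
qed simp

lemma maximal_matching_iff_vertex_cover:
  assumes "{} \<notin> E"
  shows "maximal_matching E M \<longleftrightarrow> matching E M \<and> vertex_cover E (\<Union>M)"
proof
  assume max: "maximal_matching E M"
  then have M: "matching E M" by (simp add: maximal_matching_def)
  have "e \<inter> \<Union>M \<noteq> {}" if e: "e \<in> E" for e
  proof
    assume disj: "e \<inter> \<Union>M = {}"
    then have "matching E (insert e M)" using M e unfolding matching_def by blast
    then have "e \<in> M" using max unfolding maximal_matching_def by blast
    then have "e = {}" using disj by blast
    then show False using e assms by simp
  qed
  then show "matching E M \<and> vertex_cover E (\<Union>M)" using M by (simp add: vertex_cover_def)
next
  assume M: "matching E M \<and> vertex_cover E (\<Union>M)"
  have "M' = M" if M': "matching E M'" "M \<subseteq> M'" for M'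
  proof (rule ccontr)
    assume "M' \<noteq> M"
    then obtain e where e: "e \<in> M'" "e \<notin> M" using M' by blast
    then have "e \<in> E" using M' unfolding matching_def by blast
    then obtain f x where f: "f \<in> M" "x \<in> e" "x \<in> f"
      using M unfolding vertex_cover_def by blast
    then have "e = f" using matching_edges_eqI[OF M'(1) e(1)] M'(2) by blast
    then show False using e(2) f(1) by simp
  qed
  then show "maximal_matching E M" using M by (simp add: maximal_matching_def)
qed

lemma maximal_matching_extends:
  assumes "finite E" and "matching E M\<^sub>0"
  shows "\<exists>M. maximal_matching E M \<and> M\<^sub>0 \<subseteq> M"
proof -
  have "{M. matching E M} \<subseteq> Pow E" by (auto simp: matching_def)
  then have "finite {M. matching E M}" by (rule finite_subset) (simp add: assms(1))
  then obtain M where "matching E M" "M\<^sub>0 \<subseteq> M" "\<forall>M'. matching E M' \<and> M \<subseteq> M' \<longrightarrow> M = M'"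
    using finite_has_maximal2[of "{M. matching E M}" M\<^sub>0] assms(2) by auto
  then show ?thesis unfolding maximal_matching_def by metis
qed

lemma finite_maximal_matchings: "finite E \<Longrightarrow> finite (maximal_matchings E)"
  by (rule finite_subset[of _ "Pow E"]) (auto simp: maximal_matching_def matching_def)

lemma maximal_matchings_nonempty: "finite E \<Longrightarrow> maximal_matchings E \<noteq> {}"
  using maximal_matching_extends[of E "{}"] by (auto simp: matching_def)

lemma card_le_card_maximal_matchings:
  assumes "finite E"
    and "\<And>x. x \<in> S \<Longrightarrow> matching E (m x)"
    and "\<And>x. x \<in> S \<Longrightarrow> r \<le> card (m x)"
    and "\<And>x y. x \<in> S \<Longrightarrow> y \<in> S \<Longrightarrow> matching E (m x \<union> m y) \<Longrightarrow> x = y"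
  shows "card S \<le> card {M. maximal_matching E M \<and> r \<le> card M}"
proof -
  define ext where "ext x = (SOME M. maximal_matching E M \<and> m x \<subseteq> M)" for x
  have ext: "maximal_matching E (ext x) \<and> m x \<subseteq> ext x" if "x \<in> S" for x
    unfolding ext_def by (rule someI_ex, rule maximal_matching_extends[OF assms(1) assms(2)[OF that]])
  have "inj_on ext S"
  proof (rule inj_onI)
    fix x y assume "x \<in> S" "y \<in> S" "ext x = ext y"
    with ext have "matching E (m x \<union> m y)"
      by (metis Un_least matching_subset maximal_matching_def)
    then show "x = y" using assms(4) \<open>x \<in> S\<close> \<open>y \<in> S\<close> by blast
  qed
  moreover have "ext ` S \<subseteq> {M. maximal_matching E M \<and> r \<le> card M}"
  proof safe
    fix x assume "x \<in> S"
    have "finite (ext x)"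
      using ext[OF \<open>x \<in> S\<close>] assms(1) unfolding maximal_matching_def matching_def
      by (auto intro: finite_subset)
    then show "r \<le> card (ext x)" using ext[OF \<open>x \<in> S\<close>] assms(3)[OF \<open>x \<in> S\<close>]
      by (meson card_mono le_trans)
  qed (use ext in blast)
  moreover have "finite {M. maximal_matching E M \<and> r \<le> card M}"
    using finite_maximal_matchings[OF assms(1)] by (rule finite_subset[rotated]) blast
  ultimately show ?thesis by (rule card_inj_on_le)
qed

lemma card_maximal_matchings_split:
  fixes r :: nat
  assumes "finite E"
  shows "card (maximal_matchings E)
    = card {M. maximal_matching E M \<and> card M < r} + card {M. maximal_matching E M \<and> r \<le> card M}"
proof -
  have fin: "finite (maximal_matchings E)" by (rule finite_maximal_matchings[OF assms])
  have "maximal_matchings E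
      = {M. maximal_matching E M \<and> card M < r} \<union> {M. maximal_matching E M \<and> r \<le> card M}"
    by auto
  also have "card \<dots> = card {M. maximal_matching E M \<and> card M < r} + card {M. maximal_matching E M \<and> r \<le> card M}"
    by (rule card_Un_disjoint) (use fin in \<open>auto intro: finite_subset\<close>)
  finally show ?thesis .
qed

lemma avm_le_of_card_le:
  fixes r :: nat
  assumes "finite E" and "\<And>M. maximal_matching E M \<Longrightarrow> card M \<le> r"
  shows "avm E \<le> r - card {M. maximal_matching E M \<and> card M < r} / card (maximal_matchings E)"
proof -
  let ?N = "maximal_matchings E"
  have fin: "finite ?N" and pos: "card ?N > 0"
    using finite_maximal_matchings[OF assms(1)] maximal_matchings_nonempty[OF assms(1)]
    by (auto simp: card_gt_0_iff)
  have "(\<Sum>M\<in>?N. real (card M)) \<le> (\<Sum>M\<in>?N. real r - of_bool (card M < r))"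
    using assms(2) by (intro sum_mono) (fastforce simp: of_bool_def)
  also have "\<dots> = real r * card ?N - card {M. maximal_matching E M \<and> card M < r}"
    using fin by (simp add: sum_subtractf Collect_conj_eq)
  finally show ?thesis
    using pos by (simp add: avm_def divide_simps mult.commute)
qed

lemma avm_ge_of_card_ge:
  fixes r :: nat
  assumes "finite E" and "\<And>M. maximal_matching E M \<Longrightarrow> r \<le> card M + 1"
  shows "r - card {M. maximal_matching E M \<and> card M < r} / card (maximal_matchings E) \<le> avm E"
proof -
  let ?N = "maximal_matchings E"
  have fin: "finite ?N" and pos: "card ?N > 0"
    using finite_maximal_matchings[OF assms(1)] maximal_matchings_nonempty[OF assms(1)]
    by (auto simp: card_gt_0_iff)
  have "real r * card ?N - card {M. maximal_matching E M \<and> card M < r} = (\<Sum>M\<in>?N. real r - of_bool (card M < r))"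
    using fin by (simp add: sum_subtractf Collect_conj_eq)
  also have "\<dots> \<le> (\<Sum>M\<in>?N. real (card M))"
    using assms(2) by (intro sum_mono) (fastforce simp: of_bool_def)
  finally show ?thesis
    using pos by (simp add: avm_def divide_simps mult.commute)
qed

section \<open>The graph \<open>H\<close>\<close>

definition V_triangle :: "nat set set" where
  "V_triangle = {{0,1},{1,2},{0,2}}"

definition W_triangle :: "nat set set" where
  "W_triangle = {{3,4},{4,5},{3,5}}"

lemma H_edges_eq: "H_edges = V_triangle \<union> W_triangle \<union> {{2,3}}"
  by (auto simp: H_edges_def V_triangle_def W_triangle_def)

lemma H_edge_subset: "e \<in> H_edges \<Longrightarrow> e \<subseteq> {..<6}"
  by (auto simp: H_edges_def)

lemma V_triangle_subset: "s \<in> V_triangle \<Longrightarrow> s \<subseteq> {0,1,2}"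
  by (auto simp: V_triangle_def)

lemma W_triangle_subset: "t \<in> W_triangle \<Longrightarrow> t \<subseteq> {3,4,5}"
  by (auto simp: W_triangle_def)

lemma V_W_triangle_edges_disjoint: "s \<in> V_triangle \<Longrightarrow> t \<in> W_triangle \<Longrightarrow> s \<inter> t = {}"
  by (auto simp: V_triangle_def W_triangle_def)

lemma V_W_triangle_edges_distinct:
  assumes "s \<in> V_triangle" and "t \<in> W_triangle"
  shows "s \<noteq> t"
proof
  assume "s = t"
  then have "s = {}" using V_W_triangle_edges_disjoint[OF assms] by simp
  then show False using assms(1) by (simp add: V_triangle_def)
qed

lemma card_V_W_pair: "s \<in> V_triangle \<Longrightarrow> t \<in> W_triangle \<Longrightarrow> card {s, t} = 2"
  using V_W_triangle_edges_distinct by simp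

lemma inj_on_V_W_pair: "inj_on (\<lambda>(s, t). {s, t}) (V_triangle \<times> W_triangle)"
proof (rule inj_onI, clarify)
  fix s t s' t'
  assume st: "s \<in> V_triangle" "t \<in> W_triangle" "s' \<in> V_triangle" "t' \<in> W_triangle" "{s, t} = {s', t'}"
  with V_W_triangle_edges_distinct have "s \<noteq> t'" by blast
  with st(5) show "s = s' \<and> t = t'" by (auto simp: doubleton_eq_iff)
qed

lemma empty_notin_H_edges: "{} \<notin> H_edges"
  by (simp add: H_edges_def)

lemma maximal_matching_H_triangles:
  assumes "maximal_matching H_edges M"
  obtains s t where "s \<in> V_triangle" "M \<inter> V_triangle = {s}" "t \<in> W_triangle" "M \<inter> W_triangle = {t}"
proof -
  have M: "matching H_edges M" and cover: "vertex_cover H_edges (\<Union>M)"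
    using assms by (simp_all add: maximal_matching_iff_vertex_cover[OF empty_notin_H_edges])
  have triangle_edge: "\<exists>t\<in>T. M \<inter> T = {t}"
    if "\<forall>e\<in>T. \<forall>f\<in>T. e \<inter> f \<noteq> {}" "e \<in> H_edges" "\<forall>f\<in>H_edges. f \<inter> e \<noteq> {} \<longrightarrow> f \<in> T"
    for T e
  proof -
    obtain f where "f \<in> M" "f \<inter> e \<noteq> {}" using cover \<open>e \<in> H_edges\<close> unfolding vertex_cover_def by blast
    then have "f \<in> M \<inter> T" using M that(3) unfolding matching_def by blast
    then show ?thesis using matching_Int_clique[OF M that(1)] by blast
  qed
  have "\<exists>s\<in>V_triangle. M \<inter> V_triangle = {s}"
    using triangle_edge[of V_triangle "{0,1}"] by (auto simp: H_edges_def V_triangle_def)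
  moreover have "\<exists>t\<in>W_triangle. M \<inter> W_triangle = {t}"
    using triangle_edge[of W_triangle "{4,5}"] by (auto simp: H_edges_def W_triangle_def)
  ultimately show ?thesis using that by blast
qed

lemma maximal_matching_H_iff:
  "maximal_matching H_edges M \<longleftrightarrow>
     M = {{0,1},{2,3},{4,5}} \<or> (\<exists>s\<in>V_triangle. \<exists>t\<in>W_triangle. M = {s, t} \<and> (2 \<in> s \<or> 3 \<in> t))"
  (is "_ \<longleftrightarrow> ?triple \<or> ?pair")
proof
  assume max: "maximal_matching H_edges M"
  then have M: "matching H_edges M" and cover: "vertex_cover H_edges (\<Union>M)"
    by (simp_all add: maximal_matching_iff_vertex_cover[OF empty_notin_H_edges])
  obtain s t where s: "s \<in> V_triangle" "M \<inter> V_triangle = {s}" and t: "t \<in> W_triangle" "M \<inter> W_triangle = {t}"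
    using maximal_matching_H_triangles[OF max] .
  have "M = M \<inter> H_edges" using M by (auto simp: matching_def)
  also have "\<dots> = insert s (insert t (M \<inter> {{2,3}}))"
    unfolding H_edges_eq Int_Un_distrib s(2) t(2) by (simp add: insert_commute)
  finally have M_eq: "M = insert s (insert t (M \<inter> {{2,3}}))" .
  show "?triple \<or> ?pair"
  proof (cases "{2,3} \<in> M")
    case True
    have "s \<noteq> {2,3}" "t \<noteq> {2,3}"
      using V_triangle_subset[OF s(1)] W_triangle_subset[OF t(1)] by auto
    then have "s \<inter> {2,3} = {}" "t \<inter> {2,3} = {}"
      using matching_disjointD[OF M] s(2) t(2) True by blast+
    then have "s = {0,1}" "t = {4,5}"
      using s(1) t(1) by (auto simp: V_triangle_def W_triangle_def)
    moreover have "M \<inter> {{2,3}} = {{2,3}}" using True by blast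
    ultimately show ?thesis using M_eq by (simp add: insert_commute)
  next
    case False
    then have "M \<inter> {{2,3}} = {}" by blast
    then have "M = {s, t}" using M_eq by simp
    then have "{2,3} \<inter> (s \<union> t) \<noteq> {}"
      using cover unfolding vertex_cover_def H_edges_def by simp
    then have "2 \<in> s \<or> 3 \<in> t"
      using V_triangle_subset[OF s(1)] W_triangle_subset[OF t(1)] by auto
    then show ?thesis using \<open>M = {s, t}\<close> s(1) t(1) by blast
  qed
next
  assume "?triple \<or> ?pair"
  then have "matching H_edges M \<and> vertex_cover H_edges (\<Union>M)"
  proof
    assume ?triple
    then show ?thesis by (simp add: matching_def vertex_cover_def H_edges_def)
  next
    assume ?pair
    then obtain s t where "s \<in> V_triangle" "t \<in> W_triangle" "M = {s, t}" "2 \<in> s \<or> 3 \<in> t"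
      by blast
    then show ?thesis
      unfolding V_triangle_def W_triangle_def matching_def vertex_cover_def H_edges_def
      by (elim insertE emptyE; simp)
  qed
  then show "maximal_matching H_edges M"
    by (simp add: maximal_matching_iff_vertex_cover[OF empty_notin_H_edges])
qed

lemma pendant_graph_iff: "e \<in> pendant_graph n a \<longleftrightarrow> e \<in> H_edges \<or> (\<exists>i\<in>{6..<n}. e = {i, a i})"
  by (auto simp: pendant_graph_def)

lemma finite_pendant_graph: "finite (pendant_graph n a)"
  by (simp add: pendant_graph_def H_edges_def)

lemma empty_notin_pendant_graph: "{} \<notin> pendant_graph n a"
  by (auto simp: pendant_graph_def H_edges_def)

lemma maximal_matching_pendant_graph_iff_H:
  assumes "M \<subseteq> H_edges"
  shows "maximal_matching (pendant_graph n a) M \<longleftrightarrow> maximal_matching H_edges M \<and> (\<forall>i\<in>{6..<n}. a i \<in> \<Union>M)"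
proof -
  have "\<Union>M \<subseteq> {..<6}"
    using assms H_edge_subset by blast
  then have "{i, a i} \<inter> \<Union>M \<noteq> {} \<longleftrightarrow> a i \<in> \<Union>M" if "i \<in> {6..<n}" for i
    using that by auto
  then have "vertex_cover ((\<lambda>i. {i, a i}) ` {6..<n}) (\<Union>M) \<longleftrightarrow> (\<forall>i\<in>{6..<n}. a i \<in> \<Union>M)"
    unfolding vertex_cover_def by simp
  then have "vertex_cover (pendant_graph n a) (\<Union>M) \<longleftrightarrow> vertex_cover H_edges (\<Union>M) \<and> (\<forall>i\<in>{6..<n}. a i \<in> \<Union>M)"
    by (simp add: pendant_graph_def vertex_cover_Un)
  moreover have "M \<subseteq> pendant_graph n a"
    using assms by (auto simp: pendant_graph_def)
  then have "matching (pendant_graph n a) M \<longleftrightarrow> matching H_edges M"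
    using assms by (simp add: matching_def)
  ultimately show ?thesis
    by (simp add: maximal_matching_iff_vertex_cover empty_notin_pendant_graph empty_notin_H_edges)
qed

section \<open>The graph \<open>T_n^1(3,3)\<close>\<close>

lemma finite_T1_33: "finite (T1_33 n)"
  by (simp add: T1_33_def finite_pendant_graph)

lemma T1_33_iff: "e \<in> T1_33 n \<longleftrightarrow> e \<in> H_edges \<or> (\<exists>i\<in>{6..<n}. e = {i, 2})"
  by (simp add: T1_33_def pendant_graph_iff)

lemma matching_T1_33_other_edge:
  assumes M: "matching (T1_33 n) M" and "{l, 2} \<in> M" "f \<in> M" "f \<noteq> {l, 2}"
  shows "f \<in> insert {0,1} W_triangle"
proof -
  have "f \<in> T1_33 n" using M assms(3) by (auto simp: matching_def)
  moreover have "f \<inter> {l, 2} = {}" using matching_disjointD[OF M assms(3,2,4)] .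
  ultimately have "f \<in> H_edges" "2 \<notin> f" unfolding T1_33_iff by auto
  then show ?thesis unfolding H_edges_def W_triangle_def by (elim insertE emptyE; simp)
qed

lemma maximal_matching_T1_33_leaf:
  assumes max: "maximal_matching (T1_33 n) M" and l: "l \<in> {6..<n}" "{l, 2} \<in> M"
  obtains t where "t \<in> W_triangle" "M = {{l, 2}, {0,1}, t}"
proof -
  have M: "matching (T1_33 n) M" and cover: "vertex_cover (T1_33 n) (\<Union>M)"
    using max by (simp_all add: T1_33_def maximal_matching_iff_vertex_cover empty_notin_pendant_graph)
  note other = matching_T1_33_other_edge[OF M l(2)]
  have meets: "\<exists>f\<in>M. f \<noteq> {l, 2} \<and> f \<inter> e \<noteq> {}" if "e \<in> H_edges" "2 \<notin> e" for e
  proof -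
    have "e \<in> T1_33 n" using that(1) by (simp add: T1_33_iff)
    then have "e \<inter> \<Union>M \<noteq> {}" using cover by (simp add: vertex_cover_def)
    then obtain f where "f \<in> M" "f \<inter> e \<noteq> {}" by blast
    moreover have "l \<notin> e" using H_edge_subset[OF that(1)] l(1) by auto
    then have "{l, 2} \<inter> e = {}" using that(2) by simp
    ultimately show ?thesis by auto
  qed
  have e01: "{0,1} \<in> H_edges" "2 \<notin> {0,1::nat}" by (simp_all add: H_edges_def)
  obtain f where f: "f \<in> M" "f \<noteq> {l, 2}" "f \<inter> {0,1} \<noteq> {}"
    using meets[OF e01] by blast
  have "f = {0,1}" using other[OF f(1,2)] f(3) by (auto simp: W_triangle_def)
  with f(1) have "{0,1} \<in> M" by simp
  have e34: "{3,4} \<in> H_edges" "2 \<notin> {3,4::nat}" by (simp_all add: H_edges_def)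
  obtain g where g: "g \<in> M" "g \<noteq> {l, 2}" "g \<inter> {3,4} \<noteq> {}"
    using meets[OF e34] by blast
  have "g \<in> M \<inter> W_triangle" using other[OF g(1,2)] g(1,3) by auto
  then obtain t where t: "t \<in> W_triangle" "M \<inter> W_triangle = {t}"
    using matching_Int_clique[OF M, of W_triangle] by (auto simp: W_triangle_def)
  have "M = {{l, 2}, {0,1}, t}"
  proof
    show "M \<subseteq> {{l, 2}, {0,1}, t}"
    proof
      fix f assume f: "f \<in> M"
      show "f \<in> {{l, 2}, {0,1}, t}"
      proof (cases "f = {l, 2}")
        case False
        then have "f = {0,1} \<or> f \<in> M \<inter> W_triangle" using other[OF f False] f by simp
        then show ?thesis using t(2) by auto
      qed simp
    qed
    have "t \<in> M" using t(2) by blast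
    then show "{{l, 2}, {0,1}, t} \<subseteq> M" using l(2) \<open>{0,1} \<in> M\<close> by simp
  qed
  with t(1) show ?thesis by (rule that)
qed

lemma maximal_matching_T1_33_cases:
  assumes "7 \<le> n" and max: "maximal_matching (T1_33 n) M"
  obtains "M = {{0,1},{2,3},{4,5}}"
    | s t where "s \<in> {{1,2},{0,2}}" "t \<in> W_triangle" "M = {s, t}"
    | l t where "l \<in> {6..<n}" "t \<in> W_triangle" "M = {{l, 2}, {0,1}, t}"
proof (cases "\<exists>l\<in>{6..<n}. {l, 2} \<in> M")
  case True
  then obtain l where "l \<in> {6..<n}" "{l, 2} \<in> M" by blast
  with max show ?thesis using that(3) by (metis maximal_matching_T1_33_leaf)
next
  case False
  have "M \<subseteq> H_edges"
  proof
    fix f assume "f \<in> M"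
    then have "f \<in> T1_33 n" using max by (auto simp: maximal_matching_def matching_def)
    with False \<open>f \<in> M\<close> show "f \<in> H_edges" unfolding T1_33_iff by blast
  qed
  moreover have "maximal_matching (pendant_graph n (\<lambda>_. 2)) M"
    using max by (simp add: T1_33_def)
  ultimately have H: "maximal_matching H_edges M" and "\<forall>i\<in>{6..<n}. 2 \<in> \<Union>M"
    by (simp_all add: maximal_matching_pendant_graph_iff_H)
  moreover have "6 \<in> {6..<n}" using assms(1) by simp
  ultimately have "2 \<in> \<Union>M" by blast
  from H consider "M = {{0,1},{2,3},{4,5}}"
    | s t where "s \<in> V_triangle" "t \<in> W_triangle" "M = {s, t}"
    unfolding maximal_matching_H_iff by blast
  then show ?thesis
  proof cases
    case (2 s t)
    then have "2 \<in> s" using \<open>2 \<in> \<Union>M\<close> W_triangle_subset[OF 2(2)] by auto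
    then have "s \<in> {{1,2},{0,2}}" using \<open>s \<in> V_triangle\<close> by (auto simp: V_triangle_def)
    then show ?thesis using that(2) 2(2,3) by blast
  qed (rule that(1))
qed

lemma card_W_triangle: "card W_triangle = 3"
  by (simp add: W_triangle_def doubleton_eq_iff)

lemma maximal_matching_T1_33_pair:
  assumes "s \<in> V_triangle" "2 \<in> s" "t \<in> W_triangle"
  shows "maximal_matching (T1_33 n) {s, t}"
proof -
  have "{s, t} \<subseteq> H_edges" using assms(1,3) by (simp add: H_edges_eq)
  moreover have "maximal_matching H_edges {s, t}"
    using assms unfolding maximal_matching_H_iff by blast
  ultimately show ?thesis
    using assms(2) by (simp add: T1_33_def maximal_matching_pendant_graph_iff_H)
qed

lemma card_maximal_matchings_T1_33:
  assumes "7 \<le> n"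
  shows "card (maximal_matchings (T1_33 n)) \<le> 3 * (n - 6) + 7"
proof -
  define pairs where "pairs = (\<lambda>(s, t). {s, t}) ` ({{1,2},{0,2}} \<times> W_triangle)"
  define leaf_triples where "leaf_triples = (\<lambda>(l, t). {{l, 2}, {0,1}, t}) ` ({6..<n} \<times> W_triangle)"
  have sub: "maximal_matchings (T1_33 n) \<subseteq> insert {{0,1},{2,3},{4,5}} (pairs \<union> leaf_triples)"
  proof
    fix M assume "M \<in> maximal_matchings (T1_33 n)"
    then have M: "maximal_matching (T1_33 n) M" by simp
    show "M \<in> insert {{0,1},{2,3},{4,5}} (pairs \<union> leaf_triples)"
    proof (rule maximal_matching_T1_33_cases[OF assms M])
      fix s t assume "s \<in> {{1,2},{0,2}}" "t \<in> W_triangle" "M = {s, t}"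
      then have "M \<in> pairs" unfolding pairs_def by (auto intro!: image_eqI[of _ _ "(s, t)"])
      then show ?thesis by simp
    next
      fix l t assume "l \<in> {6..<n}" "t \<in> W_triangle" "M = {{l, 2}, {0,1}, t}"
      then have "M \<in> leaf_triples" unfolding leaf_triples_def by (auto intro!: image_eqI[of _ _ "(l, t)"])
      then show ?thesis by simp
    qed simp
  qed
  have fin: "finite pairs" "finite leaf_triples"
    unfolding pairs_def leaf_triples_def by (simp_all add: W_triangle_def)
  have "card pairs \<le> card ({{1,2},{0,2::nat}} \<times> W_triangle)"
    unfolding pairs_def by (rule card_image_le) (simp add: W_triangle_def)
  also have "\<dots> \<le> 2 * 3"
    using card_two_le[of "{1,2::nat}" "{0,2}"] by (simp add: card_cartesian_product card_W_triangle)
  finally have "card pairs \<le> 2 * 3" .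
  have "card leaf_triples \<le> card ({6..<n} \<times> W_triangle)"
    unfolding leaf_triples_def by (rule card_image_le) (simp add: W_triangle_def)
  then have "card leaf_triples \<le> (n - 6) * 3"
    by (simp add: card_cartesian_product card_W_triangle)
  have "card (maximal_matchings (T1_33 n)) \<le> card (insert {{0,1},{2,3},{4,5}} (pairs \<union> leaf_triples))"
    using sub fin by (intro card_mono) simp_all
  also have "\<dots> \<le> Suc (card (pairs \<union> leaf_triples))"
    using fin by (simp add: card_insert_if)
  also have "\<dots> \<le> Suc (card pairs + card leaf_triples)"
    using card_Un_le by simp
  also have "\<dots> \<le> 3 * (n - 6) + 7"
    using \<open>card pairs \<le> 2 * 3\<close> \<open>card leaf_triples \<le> (n - 6) * 3\<close> by linarith
  finally show ?thesis .
qed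

lemma card_small_maximal_matchings_T1_33:
  "6 \<le> card {M. maximal_matching (T1_33 n) M \<and> card M < 3}"
proof -
  let ?pairs = "(\<lambda>(s, t). {s, t}) ` ({{1,2},{0,2}} \<times> W_triangle)"
  have sub: "{{1,2},{0,2}} \<times> W_triangle \<subseteq> V_triangle \<times> W_triangle"
    by (auto simp: V_triangle_def)
  have "card ({{1,2},{0,2::nat}} \<times> W_triangle) = 6"
    by (simp add: card_cartesian_product card_W_triangle doubleton_eq_iff)
  then have "card ?pairs = 6"
    using card_image[OF inj_on_subset[OF inj_on_V_W_pair sub]] by simp
  have small: "{s, t} \<in> {M. maximal_matching (T1_33 n) M \<and> card M < 3}"
    if st: "s \<in> {{1,2},{0,2::nat}}" "t \<in> W_triangle" for s t
  proof -
    from st(1) have "s \<in> V_triangle" "2 \<in> s" by (auto simp: V_triangle_def)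
    with st(2) show ?thesis by (simp add: maximal_matching_T1_33_pair card_V_W_pair)
  qed
  have "?pairs \<subseteq> {M. maximal_matching (T1_33 n) M \<and> card M < 3}"
  proof (rule image_subsetI)
    fix x assume "x \<in> {{1,2},{0,2::nat}} \<times> W_triangle"
    then show "(\<lambda>(s, t). {s, t}) x \<in> {M. maximal_matching (T1_33 n) M \<and> card M < 3}"
      using small by (cases x) (simp only: mem_Times_iff prod.case fst_conv snd_conv)
  qed
  moreover have "finite {M. maximal_matching (T1_33 n) M \<and> card M < 3}"
    using finite_maximal_matchings[OF finite_T1_33[of n]] by (rule finite_subset[rotated]) blast
  ultimately have "card ?pairs \<le> card {M. maximal_matching (T1_33 n) M \<and> card M < 3}"
    by (rule card_mono[rotated])
  with \<open>card ?pairs = 6\<close> show ?thesis by simp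
qed

lemma avm_T1_33_le:
  assumes "7 \<le> n"
  shows "avm (T1_33 n) \<le> 3 - 6 / (3 * real (n - 6) + 7)"
proof -
  let ?N = "card (maximal_matchings (T1_33 n))"
  let ?S = "card {M. maximal_matching (T1_33 n) M \<and> card M < 3}"
  have "card M \<le> 3" if "maximal_matching (T1_33 n) M" for M
  proof (rule maximal_matching_T1_33_cases[OF assms that])
    fix s t assume "M = {s, t}"
    then show ?thesis using card_two_le[of s t] by simp
  qed (simp_all add: card_three_le)
  then have "avm (T1_33 n) \<le> 3 - ?S / ?N"
    using avm_le_of_card_le[OF finite_T1_33[of n], of 3] by simp
  moreover have "0 < ?N"
    using maximal_matchings_nonempty[OF finite_T1_33] finite_maximal_matchings[OF finite_T1_33]
    by (simp add: card_gt_0_iff)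
  then have "6 / (3 * real (n - 6) + 7) \<le> 6 / ?N"
    using card_maximal_matchings_T1_33[OF assms] by (intro divide_left_mono) auto
  moreover have "6 / ?N \<le> ?S / ?N"
    using card_small_maximal_matchings_T1_33[of n] by (intro divide_right_mono) auto
  ultimately show ?thesis by linarith
qed

section \<open>Pendant graphs with leaves at \<open>v1\<close>, \<open>v2\<close>, \<open>w2\<close> and \<open>w3\<close>\<close>

lemma not_vertex_cover_H_edges:
  assumes "q \<in> {0,1,4,5}" and "T \<in> H_edges \<union> (\<lambda>q'. {q'}) ` {0,1,4,5}"
  shows "\<not> vertex_cover H_edges (insert q T)"
  using assms unfolding vertex_cover_def H_edges_def by (elim insertE emptyE imageE UnE; simp)

lemma pendant_edge_cases:
  assumes "\<forall>i\<in>{6..<n}. a i \<in> {0,1,4,5}" and "g \<in> pendant_graph n a"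
  obtains "g \<in> H_edges" "g \<inter> {..<6} = g"
    | q where "q \<in> {0,1,4,5}" "g \<notin> H_edges" "g \<inter> {..<6} = {q}"
proof (cases "g \<in> H_edges")
  case True
  then have "g \<inter> {..<6} = g" using H_edge_subset by blast
  with True show ?thesis by (rule that(1))
next
  case False
  then obtain i where i: "i \<in> {6..<n}" "g = {i, a i}"
    using assms(2) unfolding pendant_graph_iff by blast
  then have q: "a i \<in> {0,1,4,5}" using assms(1) by blast
  then have "g \<inter> {..<6} = {a i}" using i by auto
  with q False show ?thesis by (rule that(2))
qed

lemma pendant_edges_covering_H:
  assumes a: "\<forall>i\<in>{6..<n}. a i \<in> {0,1,4,5}"
    and g: "g \<in> pendant_graph n a" and g': "g' \<in> pendant_graph n a"
    and cover: "vertex_cover H_edges (g \<union> g')"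
  shows "g \<in> H_edges"
proof (rule ccontr)
  assume "g \<notin> H_edges"
  then obtain q where q: "q \<in> {0,1,4,5}" "g \<inter> {..<6} = {q}"
    by (metis pendant_edge_cases[OF a g])
  have "g' \<inter> {..<6} \<in> H_edges \<union> (\<lambda>q'. {q'}) ` {0,1,4,5}"
  proof (rule pendant_edge_cases[OF a g'])
    fix q' assume "q' \<in> {0,1,4,5}" "g' \<inter> {..<6} = {q'}"
    then show ?thesis by blast
  qed simp
  then have "\<not> vertex_cover H_edges (insert q (g' \<inter> {..<6}))"
    by (rule not_vertex_cover_H_edges[OF q(1)])
  moreover have "vertex_cover H_edges ((g \<union> g') \<inter> {..<6})"
    by (rule vertex_cover_Int[OF cover H_edge_subset])
  ultimately show False using q(2) by (simp add: Int_Un_distrib2)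
qed

lemma small_maximal_matching_pendant_graph:
  assumes a: "\<forall>i\<in>{6..<n}. a i \<in> {0,1,4,5}"
    and max: "maximal_matching (pendant_graph n a) M" and "card M \<le> 2"
  obtains s t where "s \<in> V_triangle" "t \<in> W_triangle" "M = {s, t}" "2 \<in> s \<or> 3 \<in> t"
    "\<forall>i\<in>{6..<n}. a i \<in> s \<union> t"
proof -
  have match: "matching (pendant_graph n a) M" and cover: "vertex_cover (pendant_graph n a) (\<Union>M)"
    using max by (simp_all add: maximal_matching_iff_vertex_cover empty_notin_pendant_graph)
  have M_sub: "M \<subseteq> pendant_graph n a" using match by (simp add: matching_def)
  have cover_H: "vertex_cover H_edges (\<Union>M)"
    using cover by (simp add: pendant_graph_def vertex_cover_Un)
  have "finite M" using M_sub finite_pendant_graph by (rule finite_subset)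
  moreover have "{0,1} \<inter> \<Union>M \<noteq> {}"
    using cover_H by (simp add: vertex_cover_def H_edges_def)
  then have "M \<noteq> {}" by auto
  ultimately obtain g\<^sub>1 g\<^sub>2 where M: "M = {g\<^sub>1, g\<^sub>2}"
    using \<open>card M \<le> 2\<close> by (rule card_le_2_doubletonE)
  have g: "g\<^sub>1 \<in> pendant_graph n a" "g\<^sub>2 \<in> pendant_graph n a" using M_sub M by auto
  have "vertex_cover H_edges (g\<^sub>1 \<union> g\<^sub>2)" using cover_H M by simp
  then have "g\<^sub>1 \<in> H_edges" "g\<^sub>2 \<in> H_edges"
    using pendant_edges_covering_H[OF a g] pendant_edges_covering_H[OF a g(2,1)]
    by (simp_all add: Un_commute)
  then have "M \<subseteq> H_edges" using M by simp
  then have "maximal_matching H_edges M" and leaves: "\<forall>i\<in>{6..<n}. a i \<in> \<Union>M"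
    using max by (simp_all add: maximal_matching_pendant_graph_iff_H)
  then consider "M = {{0,1},{2,3},{4,5}}"
    | s t where "s \<in> V_triangle" "t \<in> W_triangle" "M = {s, t}" "2 \<in> s \<or> 3 \<in> t"
    unfolding maximal_matching_H_iff by blast
  then show ?thesis
  proof cases
    case 1
    then have "card M = 3" by (simp add: doubleton_eq_iff)
    then show ?thesis using \<open>card M \<le> 2\<close> by simp
  next
    case (2 s t)
    then show ?thesis using that leaves by simp
  qed
qed

text \<open>The two-edge maximal matchings \<open>{s, t}\<close> of \<open>H\<close> (cf. \<open>maximal_matching_H_iff\<close>) containing \<open>P\<close>.\<close>

definition covering_pairs :: "nat set \<Rightarrow> (nat set \<times> nat set) set" where
  "covering_pairs P = {(s, t) \<in> V_triangle \<times> W_triangle. (2 \<in> s \<or> 3 \<in> t) \<and> P \<subseteq> s \<union> t}"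

lemma finite_covering_pairs: "finite (covering_pairs P)"
proof (rule finite_subset)
  show "covering_pairs P \<subseteq> V_triangle \<times> W_triangle" by (auto simp: covering_pairs_def)
  show "finite (V_triangle \<times> W_triangle)" by (simp add: V_triangle_def W_triangle_def)
qed

lemma covering_pairs_eq_filter:
  "covering_pairs P = set (filter (\<lambda>(s, t). (2 \<in> s \<or> 3 \<in> t) \<and> P \<subseteq> s \<union> t)
     (List.product [{0,1},{1,2},{0,2}] [{3,4},{4,5},{3,5}]))"
proof -
  have VW: "set (List.product [{0,1},{1,2},{0,2}] [{3,4},{4,5},{3,5}]) = V_triangle \<times> W_triangle"
    by (simp add: V_triangle_def W_triangle_def)
  show ?thesis unfolding covering_pairs_def set_filter VW by auto
qed

lemma card_covering_pairs_singleton: "p \<in> {0,1,4,5} \<Longrightarrow> card (covering_pairs {p}) \<le> 5"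
  unfolding covering_pairs_eq_filter
  by (rule card_length[THEN order_trans]) (elim insertE emptyE; simp)

lemma card_covering_pairs_doubleton:
  "p \<in> {0,1,4,5} \<Longrightarrow> q \<in> {0,1,4,5} \<Longrightarrow> p \<noteq> q \<Longrightarrow> card (covering_pairs {p, q}) \<le> 3"
  unfolding covering_pairs_eq_filter
  by (rule card_length[THEN order_trans]) (elim insertE emptyE; simp)

lemma card_small_maximal_matchings_pendant_graph:
  assumes "\<forall>i\<in>{6..<n}. a i \<in> {0,1,4,5}" and "P \<subseteq> a ` {6..<n}"
  shows "card {M. maximal_matching (pendant_graph n a) M \<and> card M < 3} \<le> card (covering_pairs P)"
proof -
  have "{M. maximal_matching (pendant_graph n a) M \<and> card M < 3}
      \<subseteq> (\<lambda>(s, t). {s, t}) ` covering_pairs P"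
  proof clarify
    fix M assume max: "maximal_matching (pendant_graph n a) M" and "card M < 3"
    then have "card M \<le> 2" by simp
    with max obtain s t where "s \<in> V_triangle" "t \<in> W_triangle" "M = {s, t}" "2 \<in> s \<or> 3 \<in> t"
      "\<forall>i\<in>{6..<n}. a i \<in> s \<union> t"
      by (rule small_maximal_matching_pendant_graph[OF assms(1)])
    then have "(s, t) \<in> covering_pairs P" using assms(2) by (auto simp: covering_pairs_def)
    with \<open>M = {s, t}\<close> show "M \<in> (\<lambda>(s, t). {s, t}) ` covering_pairs P"
      by (auto intro: image_eqI[of _ _ "(s, t)"])
  qed
  then have "card {M. maximal_matching (pendant_graph n a) M \<and> card M < 3}
      \<le> card ((\<lambda>(s, t). {s, t}) ` covering_pairs P)"
    by (rule card_mono[rotated]) (simp add: finite_covering_pairs)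
  also have "\<dots> \<le> card (covering_pairs P)"
    by (rule card_image_le) (rule finite_covering_pairs)
  finally show ?thesis .
qed

definition completing_pair :: "nat \<Rightarrow> nat set set \<Rightarrow> bool" where
  "completing_pair p h \<longleftrightarrow>
     matching H_edges h \<and> card h = 2 \<and> p \<notin> \<Union>h \<and> vertex_cover H_edges (insert p (\<Union>h))"

definition completions :: "nat \<Rightarrow> nat set set set" where
  "completions p =
    (if p = 0 then {{{1,2},{3,4}}, {{1,2},{4,5}}, {{1,2},{3,5}}, {{2,3},{4,5}}}
     else if p = 1 then {{{0,2},{3,4}}, {{0,2},{4,5}}, {{0,2},{3,5}}, {{2,3},{4,5}}}
     else if p = 4 then {{{0,1},{3,5}}, {{1,2},{3,5}}, {{0,2},{3,5}}, {{0,1},{2,3}}}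
     else {{{0,1},{3,4}}, {{1,2},{3,4}}, {{0,2},{3,4}}, {{0,1},{2,3}}})"

definition disjoint_completions :: "nat \<Rightarrow> nat set set set" where
  "disjoint_completions p =
    (if p = 0 then {{{1,2},{4,5}}, {{1,2},{3,5}}}
     else if p = 1 then {{{0,2},{4,5}}, {{0,2},{3,4}}}
     else if p = 4 then {{{0,1},{3,5}}, {{0,2},{3,5}}}
     else {{{0,1},{3,4}}, {{1,2},{3,4}}})"

lemma completions_completing:
  "p \<in> {0,1,4,5} \<Longrightarrow> \<forall>h\<in>completions p. completing_pair p h"
  unfolding completing_pair_def matching_def vertex_cover_def H_edges_def
  by (elim insertE emptyE; simp add: completions_def doubleton_eq_iff)

lemma disjoint_completions_completing:
  "p \<in> {0,1,4,5} \<Longrightarrow> \<forall>h\<in>disjoint_completions p. completing_pair p h"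
  unfolding completing_pair_def matching_def vertex_cover_def H_edges_def
  by (elim insertE emptyE; simp add: disjoint_completions_def doubleton_eq_iff)

lemma card_completions: "p \<in> {0,1,4,5} \<Longrightarrow> card (completions p) = 4"
  by (elim insertE emptyE; simp add: completions_def card_insert_if doubleton_eq_iff insert_eq_iff)

lemma card_disjoint_completions: "p \<in> {0,1,4,5} \<Longrightarrow> card (disjoint_completions p) = 2"
  by (elim insertE emptyE; simp add: disjoint_completions_def doubleton_eq_iff)

lemma disjoint_completions_disjoint:
  "p \<in> {0,1,4,5} \<Longrightarrow> q \<in> {0,1,4,5} \<Longrightarrow> p \<noteq> q \<Longrightarrow> disjoint_completions p \<inter> disjoint_completions q = {}"
  by (elim insertE emptyE; simp add: disjoint_completions_def doubleton_eq_iff)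

lemma leaf_completion_matching:
  assumes "i \<in> {6..<n}" and "a i < 6" and "completing_pair (a i) h"
  shows "matching (pendant_graph n a) (insert {i, a i} h)" and "card (insert {i, a i} h) = 3"
proof -
  have h: "h \<subseteq> H_edges" "\<forall>e\<in>h. \<forall>f\<in>h. e \<noteq> f \<longrightarrow> e \<inter> f = {}" "card h = 2" "a i \<notin> \<Union>h"
    using assms(3) by (simp_all add: completing_pair_def matching_def)
  have "i \<notin> \<Union>h" using h(1) H_edge_subset assms(1) by fastforce
  then have disj: "f \<inter> {i, a i} = {}" if "f \<in> h" for f using h(4) that by blast
  have "{i, a i} \<in> pendant_graph n a" using assms(1) unfolding pendant_graph_def by blast
  then have "insert {i, a i} h \<subseteq> pendant_graph n a" using h(1) by (auto simp: pendant_graph_def)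
  moreover have "e \<inter> f = {}" if "e \<in> insert {i, a i} h" "f \<in> insert {i, a i} h" "e \<noteq> f" for e f
    using that h(2) disj by (metis Int_commute insertE)
  ultimately show "matching (pendant_graph n a) (insert {i, a i} h)"
    by (simp add: matching_def)
  have "{i, a i} \<notin> h" using \<open>i \<notin> \<Union>h\<close> by blast
  moreover have "finite h" using h(3) by (simp add: card_ge_0_finite)
  ultimately show "card (insert {i, a i} h) = 3" using h(3) by simp
qed

lemma completing_pair_absorbs:
  assumes "matching E (insert {i, p} h \<union> h')" and "6 \<le> i" and "h' \<subseteq> H_edges"
    and "completing_pair p h"
  shows "h' \<subseteq> h"
proof
  fix e assume e: "e \<in> h'"
  show "e \<in> h"
  proof (rule ccontr)
    assume "e \<notin> h"
    have "e \<in> H_edges" using e assms(3) by blast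
    then obtain x where x: "x \<in> e" "x = p \<or> x \<in> \<Union>h"
      using assms(4) unfolding completing_pair_def vertex_cover_def by blast
    then obtain f where "f \<in> insert {i, p} h" "x \<in> f" by blast
    then have "e = f" using matching_edges_eqI[OF assms(1)] e x(1) by blast
    moreover have "i \<notin> e" using H_edge_subset[OF \<open>e \<in> H_edges\<close>] assms(2) by auto
    ultimately show False using \<open>e \<notin> h\<close> \<open>f \<in> insert {i, p} h\<close> by auto
  qed
qed

lemma card_leaf_completions_le:
  fixes F :: "nat \<Rightarrow> nat set set set"
  assumes leaves: "\<forall>i\<in>{6..<n}. a i < 6"
    and completing: "\<And>i h. i \<in> {6..<n} \<Longrightarrow> h \<in> F (a i) \<Longrightarrow> completing_pair (a i) h"
    and determines: "\<And>i j h. i \<in> {6..<n} \<Longrightarrow> j \<in> {6..<n} \<Longrightarrow> h \<in> F (a i) \<Longrightarrow> h \<in> F (a j) \<Longrightarrow> a i = a j"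
  shows "card (SIGMA i:{6..<n}. F (a i))
    \<le> card {M. maximal_matching (pendant_graph n a) M \<and> 3 \<le> card M}"
  \<comment> \<open>No matching contains two of the sets \<open>insert {i, a i} h\<close>: the \<open>H\<close>-part is forced by
    \<open>completing_pair_absorbs\<close>, and then the leaf by the shared vertex \<open>a i\<close>.\<close>
proof (rule card_le_card_maximal_matchings[OF finite_pendant_graph, where m = "\<lambda>(i, h). insert {i, a i} h"])
  fix x assume "x \<in> (SIGMA i:{6..<n}. F (a i))"
  then obtain i h where "x = (i, h)" "i \<in> {6..<n}" "h \<in> F (a i)" by blast
  then show "matching (pendant_graph n a) ((\<lambda>(i, h). insert {i, a i} h) x)"
    and "3 \<le> card ((\<lambda>(i, h). insert {i, a i} h) x)"
    using leaf_completion_matching[of i n a h] leaves completing by auto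
next
  fix x y
  assume "x \<in> (SIGMA i:{6..<n}. F (a i))" "y \<in> (SIGMA i:{6..<n}. F (a i))"
    and match: "matching (pendant_graph n a) ((\<lambda>(i, h). insert {i, a i} h) x \<union> (\<lambda>(i, h). insert {i, a i} h) y)"
  then obtain i h j h' where xy: "x = (i, h)" "y = (j, h')" and ij: "i \<in> {6..<n}" "j \<in> {6..<n}"
    and hh': "h \<in> F (a i)" "h' \<in> F (a j)" by blast
  have m: "matching (pendant_graph n a) (insert {i, a i} h \<union> insert {j, a j} h')"
    using match xy by simp
  have H: "h \<subseteq> H_edges" "h' \<subseteq> H_edges"
    using completing[OF ij(1) hh'(1)] completing[OF ij(2) hh'(2)] by (simp_all add: completing_pair_def matching_def)
  have "h' \<subseteq> h"
    using completing_pair_absorbs[OF matching_subset[OF m] _ H(2) completing[OF ij(1) hh'(1)]] ij(1) by auto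
  moreover have "h \<subseteq> h'"
    using completing_pair_absorbs[OF matching_subset[OF m] _ H(1) completing[OF ij(2) hh'(2)]] ij(2) by auto
  ultimately have "h = h'" by blast
  then have "a i = a j" using determines[OF ij] hh' by blast
  then have "{i, a i} = {j, a i}"
    using matching_edges_eqI[OF m, of "{i, a i}" "{j, a j}" "a i"] by simp
  then have "i = j" using leaves ij by (auto simp: doubleton_eq_iff)
  with xy \<open>h = h'\<close> show "x = y" by simp
qed

lemma card_Sigma_leaves:
  assumes "\<forall>i\<in>{6..<n}. a i \<in> {0,1,4,5}" and "\<And>p. p \<in> {0,1,4,5} \<Longrightarrow> card (F p) = c" and "c \<noteq> 0"
  shows "card (SIGMA i:{6..<n}. F (a i)) = (n - 6) * c"
proof -
  have "card (F (a i)) = c" if "i \<in> {6..<n}" for i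
    using assms(1) that by (intro assms(2)) blast
  from card_Sigma_const[OF finite_atLeastLessThan this assms(3)] show ?thesis by simp
qed

lemma card_large_maximal_matchings_pendant_graph_const:
  assumes a: "\<forall>i\<in>{6..<n}. a i \<in> {0,1,4,5}" and const: "\<forall>i\<in>{6..<n}. a i = a 6"
  shows "(n - 6) * 4 \<le> card {M. maximal_matching (pendant_graph n a) M \<and> 3 \<le> card M}"
proof -
  have "card (SIGMA i:{6..<n}. completions (a i))
      \<le> card {M. maximal_matching (pendant_graph n a) M \<and> 3 \<le> card M}"
  proof (rule card_leaf_completions_le[where F = completions])
    show "\<forall>i\<in>{6..<n}. a i < 6" using a by auto
  next
    fix i h assume "i \<in> {6..<n}" "h \<in> completions (a i)"
    then show "completing_pair (a i) h"
      using completions_completing[OF a[rule_format, OF \<open>i \<in> {6..<n}\<close>]] by blast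
  next
    fix i i' h assume "i \<in> {6..<n}" "i' \<in> {6..<n}"
    then have "a i = a 6" "a i' = a 6" using const by (auto dest: bspec simp del: atLeastLessThan_iff)
    then show "a i = a i'" by simp
  qed
  moreover have "card (SIGMA i:{6..<n}. completions (a i)) = (n - 6) * 4"
    using card_Sigma_leaves[OF a card_completions] by simp
  ultimately show ?thesis by simp
qed

lemma card_large_maximal_matchings_pendant_graph:
  assumes a: "\<forall>i\<in>{6..<n}. a i \<in> {0,1,4,5}"
  shows "(n - 6) * 2 \<le> card {M. maximal_matching (pendant_graph n a) M \<and> 3 \<le> card M}"
proof -
  have "card (SIGMA i:{6..<n}. disjoint_completions (a i))
      \<le> card {M. maximal_matching (pendant_graph n a) M \<and> 3 \<le> card M}"
  proof (rule card_leaf_completions_le[where F = disjoint_completions])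
    show "\<forall>i\<in>{6..<n}. a i < 6" using a by auto
  next
    fix i h assume "i \<in> {6..<n}" "h \<in> disjoint_completions (a i)"
    then show "completing_pair (a i) h"
      using disjoint_completions_completing[OF a[rule_format, OF \<open>i \<in> {6..<n}\<close>]] by blast
  next
    fix i i' h assume i: "i \<in> {6..<n}" "i' \<in> {6..<n}"
      and h: "h \<in> disjoint_completions (a i)" "h \<in> disjoint_completions (a i')"
    show "a i = a i'"
    proof (rule ccontr)
      assume "a i \<noteq> a i'"
      with a i have "disjoint_completions (a i) \<inter> disjoint_completions (a i') = {}"
        by (intro disjoint_completions_disjoint) simp_all
      with h show False by blast
    qed
  qed
  moreover have "card (SIGMA i:{6..<n}. disjoint_completions (a i)) = (n - 6) * 2"
    using card_Sigma_leaves[OF a card_disjoint_completions] by simp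
  ultimately show ?thesis by simp
qed

lemma card_small_vs_large_maximal_matchings_pendant_graph:
  assumes "7 \<le> n" and a: "\<forall>i\<in>{6..<n}. a i \<in> {0,1,4,5}"
  shows "card {M. maximal_matching (pendant_graph n a) M \<and> card M < 3} * (3 * (n - 6) + 1)
    < 6 * card {M. maximal_matching (pendant_graph n a) M \<and> 3 \<le> card M}"
    (is "?S * (3 * ?k + 1) < 6 * ?L")
proof -
  have six: "6 \<in> {6..<n}" and "a 6 \<in> {0,1,4,5}" using assms by auto
  show ?thesis
  proof (cases "\<forall>i\<in>{6..<n}. a i = a 6")
    case True
    have "?S \<le> card (covering_pairs {a 6})"
      using six by (intro card_small_maximal_matchings_pendant_graph[OF a]) auto
    also have "\<dots> \<le> 5" by (rule card_covering_pairs_singleton) fact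
    finally have "?S * (3 * ?k + 1) \<le> 5 * (3 * ?k + 1)" by (rule mult_le_mono1)
    also have "\<dots> < 6 * (?k * 4)" using assms(1) by auto
    also have "\<dots> \<le> 6 * ?L" using card_large_maximal_matchings_pendant_graph_const[OF a True] by simp
    finally show ?thesis .
  next
    case False
    then obtain j where j: "j \<in> {6..<n}" "a j \<noteq> a 6" by blast
    then have "a j \<in> {0,1,4,5}" "j \<noteq> 6" using a by auto
    have "?S \<le> card (covering_pairs {a 6, a j})"
      using six j by (intro card_small_maximal_matchings_pendant_graph[OF a]) auto
    also have "\<dots> \<le> 3"
      by (rule card_covering_pairs_doubleton) (use \<open>a 6 \<in> {0,1,4,5}\<close> \<open>a j \<in> {0,1,4,5}\<close> j(2) in auto)
    finally have "?S * (3 * ?k + 1) \<le> 3 * (3 * ?k + 1)" by (rule mult_le_mono1)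
    also have "\<dots> < 6 * (?k * 2)" using j(1) \<open>j \<noteq> 6\<close> by auto
    also have "\<dots> \<le> 6 * ?L" using card_large_maximal_matchings_pendant_graph[OF a] by simp
    finally show ?thesis .
  qed
qed

lemma card_maximal_matching_pendant_graph_ge_2:
  assumes a: "\<forall>i\<in>{6..<n}. a i \<in> {0,1,4,5}" and max: "maximal_matching (pendant_graph n a) M"
  shows "2 \<le> card M"
proof (rule ccontr)
  assume "\<not> 2 \<le> card M"
  then have "card M \<le> 2" by simp
  with max obtain s t where "s \<in> V_triangle" "t \<in> W_triangle" "M = {s, t}"
    by (rule small_maximal_matching_pendant_graph[OF a])
  with \<open>\<not> 2 \<le> card M\<close> show False by (simp add: card_V_W_pair)
qed

lemma avm_pendant_graph_gt:
  assumes "7 \<le> n" and a: "\<forall>i\<in>{6..<n}. a i \<in> {0,1,4,5}"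
  shows "3 - 6 / (3 * real (n - 6) + 7) < avm (pendant_graph n a)"
proof -
  let ?S = "card {M. maximal_matching (pendant_graph n a) M \<and> card M < 3}"
  let ?L = "card {M. maximal_matching (pendant_graph n a) M \<and> 3 \<le> card M}"
  let ?N = "card (maximal_matchings (pendant_graph n a))"
  have N: "?N = ?S + ?L" by (rule card_maximal_matchings_split[OF finite_pendant_graph])
  have count: "?S * (3 * (n - 6) + 1) < 6 * ?L"
    by (rule card_small_vs_large_maximal_matchings_pendant_graph[OF assms])
  then have "real (?S * (3 * (n - 6) + 1)) < real (6 * ?L)"
    by (simp only: of_nat_less_iff)
  then have "real ?S * (3 * real (n - 6) + 1) < 6 * real ?L"
    by (simp only: of_nat_mult of_nat_add of_nat_numeral of_nat_1)
  then have "real ?S * (3 * real (n - 6) + 7) < 6 * real ?N"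
    unfolding N of_nat_add by argo
  moreover have "0 < ?N" using count N by simp
  ultimately have "real ?S / ?N < 6 / (3 * real (n - 6) + 7)"
    by (simp add: field_simps)
  moreover have "3 \<le> card M + 1" if "maximal_matching (pendant_graph n a) M" for M
    using card_maximal_matching_pendant_graph_ge_2[OF a that] by simp
  then have "real 3 - real ?S / ?N \<le> avm (pendant_graph n a)"
    by (rule avm_ge_of_card_ge[OF finite_pendant_graph])
  ultimately show ?thesis by linarith
qed

theorem lemma4p2:
  fixes n :: nat and a :: "nat \<Rightarrow> nat"
  assumes "n \<ge> 7"
    and "\<forall>i\<in>{6..<n}. a i \<in> {0, 1, 4, 5}"
  shows "avm (pendant_graph n a) > avm (T1_33 n)"
  using avm_T1_33_le[OF assms(1)] avm_pendant_graph_gt[OF assms] by linarith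

end
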